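(* Let $(g,f)$ be a Riordan matrix with $g(t)=\sum_{j\ge0}g_jt^j$, $g_0=1$, and $f(t)=\sum_{j\ge1}f_jt^j$, $f_1\neq0$. Then $(g,f)\in R_{1,1,1}$ if and only if $f_1=1$, $f_2=g_1$ and $g_2=g_1^2$; equivalently, $f_1=1$, $f_2=g_1$ and $g_2=f_2^2$.
   Context: Let $K$ be $\mathbb{R}$ or $\mathbb{C}$. A (proper) Riordan matrix is a pair $(g,f)$ of formal power series in $K[[t]]$ with $g(0)=1$, $f(0)=0$, $f'(0)\neq 0$. The $A$-sequence $(a_j)$ of $(g,f)$ is the unique sequence whose generating function $A(t)$ satisfies $f(t)=tA(f(t))$; the $Z$-sequence $(z_j)$ is the unique sequence whose generating function $Z(t)$ satisfies $g(t)=1/(1-tZ(f(t)))$. $R_{1,1,1}$ denotes the set of Riordan matrices with $a_0=1$, $z_0=a_1$ and $z_1=0$. *)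

theory Defs
  imports "HOL-Computational_Algebra.Formal_Power_Series"
begin

unbundle fps_syntax

definition riordan :: "'a::field fps \<Rightarrow> 'a fps \<Rightarrow> bool" where
  "riordan g f \<longleftrightarrow> g $ 0 = 1 \<and> f $ 0 = 0 \<and> f $ 1 \<noteq> 0"

definition A_seq :: "'a::field fps \<Rightarrow> 'a fps" where
  "A_seq f = (THE A. f = fps_X * (A oo f))"

definition Z_seq :: "'a::field fps \<Rightarrow> 'a fps \<Rightarrow> 'a fps" where
  "Z_seq g f = (THE Z. g = inverse (1 - fps_X * (Z oo f)))"

definition R111 :: "'a::field fps \<Rightarrow> 'a fps \<Rightarrow> bool" where
  "R111 g f \<longleftrightarrow> riordan g f \<and> A_seq f $ 0 = 1 \<and>
     Z_seq g f $ 0 = A_seq f $ 1 \<and> Z_seq g f $ 1 = 0"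

end

theory Submission
  imports Defs
begin

unbundle fps_syntax

text \<open>
  Since f has a compositional inverse, every power series h with h(0) = 0 can be written
  uniquely as t B(f(t)); this gives A from h = f and Z from h = 1 - 1/g.
  Comparing the coefficients of t and t^2 then yields a0 = f1, a1 f1 = f2, z0 = g1 and
  z1 f1 = g2 - g1^2, and as f1 \<noteq> 0 the defining conditions of R_{1,1,1} become
  f1 = 1, f2 = g1 and g2 = g1^2.
\<close>

lemma fps_compose_surj_right:
  fixes f h :: "'a::field fps"
  assumes "f $ 0 = 0" "f $ 1 \<noteq> 0"
  shows "\<exists>!B. B oo f = h"
proof -
  have "fps_inv f $ 0 = 0" by (simp add: fps_inv_def)
  then have "(h oo fps_inv f) oo f = h"
    by (simp add: fps_compose_assoc[symmetric] fps_inv[OF assms] assms)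
  then show ?thesis
    using fps_compose_inj_right[OF assms] by metis
qed

lemma ex1_fps_X_mult_compose:
  fixes f h :: "'a::field fps"
  assumes "f $ 0 = 0" "f $ 1 \<noteq> 0" "h $ 0 = 0"
  shows "\<exists>!B. h = fps_X * (B oo f)"
proof -
  have "h = fps_X * fps_shift 1 h"
    using assms(3) by (simp add: fps_eq_iff)
  then have "h = fps_X * (B oo f) \<longleftrightarrow> B oo f = fps_shift 1 h" for B
    by (metis fps_X_neq_zero mult_left_cancel)
  with fps_compose_surj_right[OF assms(1,2)] show ?thesis by simp
qed

lemma A_seq_eq:
  fixes f :: "'a::field fps"
  assumes "f $ 0 = 0" "f $ 1 \<noteq> 0"
  shows "f = fps_X * (A_seq f oo f)"
  unfolding A_seq_def by (rule theI') (rule ex1_fps_X_mult_compose[OF assms assms(1)])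

lemma fps_eq_inverse_one_minus_iff:
  fixes g W :: "'a::field fps"
  assumes "g $ 0 = 1"
  shows "g = inverse (1 - fps_X * W) \<longleftrightarrow> 1 - inverse g = fps_X * W"
proof -
  have "(1 - fps_X * W) $ 0 \<noteq> 0" by simp
  then have "g = inverse (1 - fps_X * W) \<longleftrightarrow> inverse g = 1 - fps_X * W"
    using assms by (metis fps_inverse_idempotent zero_neq_one)
  then show ?thesis by (auto simp: algebra_simps)
qed

lemma Z_seq_eq:
  fixes g f :: "'a::field fps"
  assumes "riordan g f"
  shows "g = inverse (1 - fps_X * (Z_seq g f oo f))"
proof -
  have g0: "g $ 0 = 1" and f0: "f $ 0 = 0" and f1: "f $ 1 \<noteq> 0"
    using assms by (auto simp: riordan_def)
  have "(1 - inverse g) $ 0 = 0"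
    using g0 by simp
  then have "\<exists>!Z. 1 - inverse g = fps_X * (Z oo f)"
    by (rule ex1_fps_X_mult_compose[OF f0 f1])
  then show ?thesis
    unfolding Z_seq_def fps_eq_inverse_one_minus_iff[OF g0] by (rule theI')
qed

lemma fps_X_mult_compose_nth:
  fixes B f :: "'a::field fps"
  assumes "f $ 0 = 0"
  shows "(fps_X * (B oo f)) $ 1 = B $ 0" "(fps_X * (B oo f)) $ 2 = B $ 1 * f $ 1"
  using assms by (simp_all add: fps_compose_nth numeral_2_eq_2)

lemma one_minus_inverse_nth:
  fixes g :: "'a::field fps"
  assumes "g $ 0 = 1"
  shows "(1 - inverse g) $ 1 = g $ 1" "(1 - inverse g) $ 2 = g $ 2 - (g $ 1)^2"
  using assms by (simp_all add: fps_inverse_def numeral_2_eq_2 power2_eq_square)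

lemma R111_iff:
  fixes g f :: "'a::field fps"
  assumes "riordan g f"
  shows "R111 g f \<longleftrightarrow> f $ 1 = 1 \<and> f $ 2 = g $ 1 \<and> g $ 2 = (g $ 1)^2"
proof -
  have g0: "g $ 0 = 1" and f0: "f $ 0 = 0" and f1: "f $ 1 \<noteq> 0"
    using assms by (auto simp: riordan_def)
  define A Z where "A = A_seq f" and "Z = Z_seq g f"
  have "f = fps_X * (A oo f)"
    using A_seq_eq[OF f0 f1] by (simp add: A_def)
  from arg_cong[OF this, of "\<lambda>h. h $ 1"] arg_cong[OF this, of "\<lambda>h. h $ 2"]
  have a0: "A $ 0 = f $ 1" and a1: "A $ 1 * f $ 1 = f $ 2"
    by (simp_all only: fps_X_mult_compose_nth[OF f0])
  have "1 - inverse g = fps_X * (Z oo f)"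
    using Z_seq_eq[OF assms] fps_eq_inverse_one_minus_iff[OF g0] by (simp add: Z_def)
  from arg_cong[OF this, of "\<lambda>h. h $ 1"] arg_cong[OF this, of "\<lambda>h. h $ 2"]
  have z0: "g $ 1 = Z $ 0" and z1: "g $ 2 - (g $ 1)^2 = Z $ 1 * f $ 1"
    by (simp_all only: fps_X_mult_compose_nth[OF f0] one_minus_inverse_nth[OF g0])
  have "R111 g f \<longleftrightarrow> A $ 0 = 1 \<and> Z $ 0 = A $ 1 \<and> Z $ 1 = 0"
    using assms by (simp add: R111_def A_def Z_def)
  also have "\<dots> \<longleftrightarrow> f $ 1 = 1 \<and> f $ 2 = g $ 1 \<and> g $ 2 = (g $ 1)^2"
  proof -
    have "Z $ 1 = 0 \<longleftrightarrow> g $ 2 = (g $ 1)^2"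
      using z1 f1 by (metis eq_iff_diff_eq_0 mult_eq_0_iff)
    moreover have "f $ 1 = 1 \<Longrightarrow> A $ 1 = f $ 2"
      using a1 by simp
    ultimately show ?thesis
      using a0 z0 by (metis (no_types))
  qed
  finally show ?thesis .
qed

theorem corollary4p5:
  fixes g f :: "real fps" and gc fc :: "complex fps"
  assumes "riordan g f" and "riordan gc fc"
  shows "(R111 g f \<longleftrightarrow> f $ 1 = 1 \<and> f $ 2 = g $ 1 \<and> g $ 2 = (g $ 1)^2)
       \<and> (R111 g f \<longleftrightarrow> f $ 1 = 1 \<and> f $ 2 = g $ 1 \<and> g $ 2 = (f $ 2)^2)
       \<and> (R111 gc fc \<longleftrightarrow> fc $ 1 = 1 \<and> fc $ 2 = gc $ 1 \<and> gc $ 2 = (gc $ 1)^2)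
       \<and> (R111 gc fc \<longleftrightarrow> fc $ 1 = 1 \<and> fc $ 2 = gc $ 1 \<and> gc $ 2 = (fc $ 2)^2)"
  using R111_iff[OF assms(1)] R111_iff[OF assms(2)] by auto

end
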